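(* Consider a quantum data-syndrome code with $n$ qubits and $m$ measurement bits, $N=2n+m$, and parity check matrix $H_{DS}=[F\ \ I_m]\in\mathbb F_2^{m\times N}$, where $F$ is the $m\times 2n$ matrix with rows $f^{(1)},\dots,f^{(m)}$. Let $\mathscr S_{DS}\subseteq\mathbb F_2^N$ be the row span of $H_{DS}$ and $T$ the $|\mathscr S_{DS}|\times N$ matrix whose rows are exactly the elements of $\mathscr S_{DS}$ (each once). Let $\gamma\in\Delta^{D}$. Then in the restriction of $T$ to the columns indexed by $\overline\gamma$, every bit string in $\mathbb F_2^{\overline\gamma}$ appears equally often as a row.
   Context: Phase space representation: a Pauli operator $X^{x_1}Z^{z_1}\otimes\cdots\otimes X^{x_n}Z^{z_n}$ (modulo phases) is identified with $(x,z)\in\mathbb F_2^{2n}$; for $v=(x,z)$ let $\overline v=(z,x)$. The code is given by pairwise commuting stabilizer generators $g^{(1)},\dots,g^{(l)}\in\mathbb F_2^{2n}$ (i.e. $\overline{g^{(i)}}\cdot g^{(j)}=0$) and a classical generator matrix $G_C=[I_l\ A]\in\mathbb F_2^{l\times m}$; $f^{(i)}=\sum_{j=1}^l(G_C)_{j,i}g^{(j)}$ for $i\in[m]$. Errors are $e=(e_d,e_m)\in\mathbb F_2^{2n}\times\mathbb F_2^m=\mathbb F_2^N$, with $\overline e=(\overline{e_d},e_m)$, and syndrome $\mathrm{syn}(e)_i=f^{(i)}\cdot\overline{e_d}+(e_m)_i$, i.e. $\mathrm{syn}(e)=H_{DS}\overline e$. Vectors are identified with support sets in $[N]$; for $\gamma\subseteq[N]$,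 $\overline\gamma$ is its image under the coordinate permutation swapping $i\leftrightarrow i+n$ for $i\in[n]$ and fixing $2n+1,\dots,N$. $\Delta^{D}=\{\gamma\subseteq[N]:\mathrm{syn}(e)\ne0 \text{ for all nonzero } e \text{ with } \mathrm{supp}(e)\subseteq\gamma\}$. *)

theory Defs
  imports Main
begin

text \<open>Vectors of F_2^N are identified with their support sets in [N] = {1..N}.
  Addition is symmetric difference; the F_2 sum of a family is the set of
  coordinates covered an odd number of times; the dot product is the parity
  of the size of the intersection (True = 1).\<close>

definition f2sum :: "('a \<Rightarrow> nat set) \<Rightarrow> 'a set \<Rightarrow> nat set" where
  "f2sum F J = {k. odd (card {j \<in> J. k \<in> F j})}"

definition f2dot :: "nat set \<Rightarrow> nat set \<Rightarrow> bool" where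
  "f2dot u v = odd (card (u \<inter> v))"

definition swp :: "nat \<Rightarrow> nat \<Rightarrow> nat" where
  "swp n i = (if 1 \<le> i \<and> i \<le> n then i + n
              else if n < i \<and> i \<le> 2*n then i - n else i)"

definition bar :: "nat \<Rightarrow> nat set \<Rightarrow> nat set" where
  "bar n \<gamma> = swp n ` \<gamma>"

text \<open>Classical generator matrix G_C = [I_l A] (l x m); A j k for j in [l], k in [m-l].\<close>
definition GC :: "nat \<Rightarrow> (nat \<Rightarrow> nat \<Rightarrow> bool) \<Rightarrow> nat \<Rightarrow> nat \<Rightarrow> bool" where
  "GC l A j i = (if i \<le> l then j = i else A j (i - l))"

definition fvec :: "nat \<Rightarrow> (nat \<Rightarrow> nat \<Rightarrow> bool) \<Rightarrow> (nat \<Rightarrow> nat set) \<Rightarrow> nat \<Rightarrow> nat set" where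
  "fvec l A g i = f2sum g {j \<in> {1..l}. GC l A j i}"

text \<open>syn(e)_i = f^(i) . bar(e_d) + (e_m)_i, returned as the support set in [m];
  coordinate i of e_m is coordinate 2n+i of e.\<close>
definition syn :: "nat \<Rightarrow> nat \<Rightarrow> nat \<Rightarrow> (nat \<Rightarrow> nat \<Rightarrow> bool) \<Rightarrow> (nat \<Rightarrow> nat set) \<Rightarrow> nat set \<Rightarrow> nat set" where
  "syn n m l A g e = {i \<in> {1..m}.
      f2dot (fvec l A g i) (bar n (e \<inter> {1..2*n})) \<noteq> (2*n + i \<in> e)}"

definition DeltaD :: "nat \<Rightarrow> nat \<Rightarrow> nat \<Rightarrow> (nat \<Rightarrow> nat \<Rightarrow> bool) \<Rightarrow> (nat \<Rightarrow> nat set) \<Rightarrow> nat set set" where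
  "DeltaD n m l A g = {\<gamma>. \<gamma> \<subseteq> {1..2*n+m} \<and>
      (\<forall>e. e \<subseteq> \<gamma> \<and> e \<noteq> {} \<longrightarrow> syn n m l A g e \<noteq> {})}"

text \<open>Row i of H_DS = [F I_m]: (f^(i), unit vector i in the measurement part).\<close>
definition HDSrow :: "nat \<Rightarrow> nat \<Rightarrow> (nat \<Rightarrow> nat \<Rightarrow> bool) \<Rightarrow> (nat \<Rightarrow> nat set) \<Rightarrow> nat \<Rightarrow> nat set" where
  "HDSrow n l A g i = fvec l A g i \<union> {2*n + i}"

definition SDS :: "nat \<Rightarrow> nat \<Rightarrow> nat \<Rightarrow> (nat \<Rightarrow> nat \<Rightarrow> bool) \<Rightarrow> (nat \<Rightarrow> nat set) \<Rightarrow> nat set set" where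
  "SDS n m l A g = {f2sum (HDSrow n l A g) I | I. I \<subseteq> {1..m}}"

end

theory Submission
  imports Defs
begin

text \<open>Restriction to the coordinates \<open>bar \<gamma>\<close> is an \<open>F_2\<close>-linear map on the row space
  \<open>S_DS\<close>; its fibres are cosets of its kernel, hence all of the same size, so it suffices
  that the map is onto \<open>F_2^(bar \<gamma>)\<close>. By duality it is onto unless some nonzero \<open>e\<close>
  supported in \<open>bar \<gamma>\<close> is orthogonal to every row of \<open>H_DS\<close>, i.e. \<open>H_DS e = 0\<close>.
  But \<open>H_DS e = syn (bar e)\<close>, and \<open>bar e\<close> is a nonzero error supported in \<open>\<gamma>\<close>,
  which contradicts \<open>\<gamma> \<in> \<Delta>\<^sup>D\<close>.\<close>

lemma odd_card_sym_diff:
  assumes "finite A" "finite B"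
  shows "odd (card (sym_diff A B)) \<longleftrightarrow> odd (card A) \<noteq> odd (card B)"
proof -
  have "card (sym_diff A B) + card (A \<inter> B) = card (A \<union> B)"
    using assms by (subst card_Un_disjoint[symmetric]) (auto intro: arg_cong[where f = card])
  moreover have "card (A \<union> B) + card (A \<inter> B) = card A + card B"
    using assms by (rule card_Un_Int[symmetric])
  ultimately show ?thesis by presburger
qed

lemma f2sum_sym_diff:
  assumes "finite I" "finite J"
  shows "f2sum F (sym_diff I J) = sym_diff (f2sum F I) (f2sum F J)"
proof (rule set_eqI)
  fix k
  have "{j \<in> sym_diff I J. k \<in> F j} = sym_diff {j \<in> I. k \<in> F j} {j \<in> J. k \<in> F j}"
    by blast
  then have "k \<in> f2sum F (sym_diff I J) \<longleftrightarrow>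
      odd (card {j \<in> I. k \<in> F j}) \<noteq> odd (card {j \<in> J. k \<in> F j})"
    using assms by (simp add: f2sum_def odd_card_sym_diff)
  then show "k \<in> f2sum F (sym_diff I J) \<longleftrightarrow> k \<in> sym_diff (f2sum F I) (f2sum F J)"
    by (auto simp: f2sum_def)
qed

lemma f2sum_empty [simp]: "f2sum F {} = {}"
  by (simp add: f2sum_def)

lemma f2sum_singleton [simp]: "f2sum F {i} = F i"
proof -
  have "{j \<in> {i}. k \<in> F j} = (if k \<in> F i then {i} else {})" for k
    by auto
  then show ?thesis
    by (auto simp: f2sum_def)
qed

definition f2_subspace :: "'a set set \<Rightarrow> bool" where
  "f2_subspace S \<longleftrightarrow> {} \<in> S \<and> (\<forall>s\<in>S. \<forall>t\<in>S. sym_diff s t \<in> S)"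

lemma f2_subspace_sym_diff:
  "f2_subspace S \<Longrightarrow> s \<in> S \<Longrightarrow> t \<in> S \<Longrightarrow> sym_diff s t \<in> S"
  by (simp add: f2_subspace_def)

lemma sym_diff_additive_eq_parity:
  fixes \<phi> :: "'a set \<Rightarrow> bool"
  assumes "finite B"
    and additive: "\<And>c d. c \<subseteq> B \<Longrightarrow> d \<subseteq> B \<Longrightarrow> \<phi> (sym_diff c d) \<longleftrightarrow> \<phi> c \<noteq> \<phi> d"
    and "c \<subseteq> B"
  shows "\<phi> c \<longleftrightarrow> odd (card (c \<inter> {y \<in> B. \<phi> {y}}))"
  using finite_subset[OF \<open>c \<subseteq> B\<close> \<open>finite B\<close>] \<open>c \<subseteq> B\<close>
proof (induction c rule: finite_subset_induct')
  case empty
  show ?case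
    using additive[of "{}" "{}"] by simp
next
  case (insert y c)
  have "insert y c = sym_diff {y} c"
    using \<open>y \<notin> c\<close> by blast
  then have "\<phi> (insert y c) \<longleftrightarrow> \<phi> {y} \<noteq> \<phi> c"
    using additive[of "{y}" c] insert.hyps by simp
  moreover have "finite (c \<inter> {y \<in> B. \<phi> {y}})"
    using insert.hyps(1) by simp
  ultimately show ?case
    using insert.IH insert.hyps by (auto simp: Int_insert_left)
qed

text \<open>If no element of \<open>S\<close> has trace \<open>{x}\<close> on \<open>insert x B\<close>, then whether \<open>x \<in> s\<close> is an
  additive function of the trace \<open>s \<inter> B\<close>; writing it as a parity gives the orthogonal vector.\<close>

lemma f2_subspace_obtain_orthogonal:
  assumes S: "f2_subspace S" and B: "finite B" "x \<notin> B"
    and traces: "\<And>b. b \<subseteq> B \<Longrightarrow> \<exists>s\<in>S. s \<inter> B = b"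
    and no_unit: "\<not> (\<exists>t\<in>S. t \<inter> insert x B = {x})"
  obtains e where "e \<subseteq> B" "\<And>s. s \<in> S \<Longrightarrow> even (card (s \<inter> insert x e))"
proof
  define \<phi> where "\<phi> c \<longleftrightarrow> (\<exists>s\<in>S. s \<inter> B = c \<and> x \<in> s)" for c
  have kernel: "x \<notin> s" if "s \<in> S" "s \<inter> B = {}" for s
    using no_unit that by blast
  have determined: "\<phi> (s \<inter> B) \<longleftrightarrow> x \<in> s" if "s \<in> S" for s
  proof
    assume "\<phi> (s \<inter> B)"
    then obtain s' where "s' \<in> S" "s' \<inter> B = s \<inter> B" "x \<in> s'"
      unfolding \<phi>_def by blast
    moreover from this have "x \<notin> sym_diff s s'"
      using kernel[of "sym_diff s s'"] f2_subspace_sym_diff[OF S \<open>s \<in> S\<close>] by blast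
    ultimately show "x \<in> s"
      by blast
  qed (use that \<phi>_def in blast)
  have "\<phi> (sym_diff c d) \<longleftrightarrow> \<phi> c \<noteq> \<phi> d" if cd: "c \<subseteq> B" "d \<subseteq> B" for c d
  proof -
    obtain sc sd where sc: "sc \<in> S" "sc \<inter> B = c" and sd: "sd \<in> S" "sd \<inter> B = d"
      using traces[OF cd(1)] traces[OF cd(2)] by blast
    then have "sym_diff c d = sym_diff sc sd \<inter> B"
      by blast
    then have "\<phi> (sym_diff c d) \<longleftrightarrow> x \<in> sym_diff sc sd"
      using determined f2_subspace_sym_diff[OF S sc(1) sd(1)] by simp
    also have "\<dots> \<longleftrightarrow> \<phi> c \<noteq> \<phi> d"
      using determined sc sd by blast
    finally show ?thesis .
  qed
  then have parity: "x \<in> s \<longleftrightarrow> odd (card (s \<inter> B \<inter> {y \<in> B. \<phi> {y}}))" if "s \<in> S" for s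
    using sym_diff_additive_eq_parity[OF B(1), of \<phi> "s \<inter> B"] determined[OF that] by blast
  show "{y \<in> B. \<phi> {y}} \<subseteq> B"
    by blast
  fix s assume "s \<in> S"
  have "s \<inter> B \<inter> {y \<in> B. \<phi> {y}} = s \<inter> {y \<in> B. \<phi> {y}}"
    by blast
  moreover have "finite (s \<inter> {y \<in> B. \<phi> {y}})"
    using B(1) by simp
  ultimately show "even (card (s \<inter> insert x {y \<in> B. \<phi> {y}}))"
    using parity[OF \<open>s \<in> S\<close>] B(2) by (auto simp: Int_insert_right)
qed

lemma f2_subspace_trace_surj:
  assumes S: "f2_subspace S" and "finite B"
    and nondegenerate: "\<And>e. e \<subseteq> B \<Longrightarrow> e \<noteq> {} \<Longrightarrow> \<exists>s\<in>S. odd (card (s \<inter> e))"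
    and "b \<subseteq> B"
  shows "\<exists>s\<in>S. s \<inter> B = b"
  using \<open>finite B\<close> nondegenerate \<open>b \<subseteq> B\<close>
proof (induction B arbitrary: b rule: finite_induct)
  case empty
  then show ?case
    using S by (auto simp: f2_subspace_def)
next
  case (insert x B)
  have "\<exists>s\<in>S. odd (card (s \<inter> e))" if "e \<subseteq> B" "e \<noteq> {}" for e
    using insert.prems(1) that by blast
  then have traces: "\<exists>s\<in>S. s \<inter> B = c" if "c \<subseteq> B" for c
    using insert.IH that by blast
  obtain t where t: "t \<in> S" "t \<inter> insert x B = {x}"
  proof (rule ccontr)
    assume "\<not> thesis"
    then have "\<not> (\<exists>t\<in>S. t \<inter> insert x B = {x})"
      using that by blast
    then obtain e where "e \<subseteq> B" "\<And>s. s \<in> S \<Longrightarrow> even (card (s \<inter> insert x e))"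
      using f2_subspace_obtain_orthogonal[OF S insert.hyps traces] by blast
    then show False
      using insert.prems(1)[of "insert x e"] by blast
  qed
  obtain s where s: "s \<in> S" "s \<inter> B = b - {x}"
    using traces[of "b - {x}"] insert.prems(2) by blast
  show ?case
  proof (cases "x \<in> s \<longleftrightarrow> x \<in> b")
    case True
    then have "s \<inter> insert x B = b"
      using s insert.prems(2) by auto
    then show ?thesis
      using s by blast
  next
    case False
    then have "sym_diff s t \<inter> insert x B = b"
      using s t insert.prems(2) insert.hyps(2) by auto
    then show ?thesis
      using f2_subspace_sym_diff[OF S s(1) t(1)] by blast
  qed
qed

lemma f2_subspace_card_trace_fibres_eq:
  assumes S: "f2_subspace S" and "s \<in> S" "t \<in> S"
  shows "card {u \<in> S. u \<inter> B = s \<inter> B} = card {u \<in> S. u \<inter> B = t \<inter> B}"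
proof -
  have shift: "(\<lambda>u. sym_diff u (sym_diff a c)) ` {u \<in> S. u \<inter> B = a \<inter> B}
      \<subseteq> {u \<in> S. u \<inter> B = c \<inter> B}" if "a \<in> S" "c \<in> S" for a c
    using f2_subspace_sym_diff[OF S _ f2_subspace_sym_diff[OF S that]] by auto
  have "sym_diff t s = sym_diff s t"
    by blast
  then have "bij_betw (\<lambda>u. sym_diff u (sym_diff s t))
      {u \<in> S. u \<inter> B = s \<inter> B} {u \<in> S. u \<inter> B = t \<inter> B}"
    using shift[of s t] shift[of t s] assms(2,3)
    by (intro bij_betw_byWitness[where f' = "\<lambda>u. sym_diff u (sym_diff s t)"]) auto
  then show ?thesis
    by (rule bij_betw_same_card)
qed

lemma swp_swp [simp]: "swp n (swp n i) = i"
  by (auto simp: swp_def)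

lemma mem_bar: "x \<in> bar n e \<longleftrightarrow> swp n x \<in> e"
  unfolding bar_def by (metis image_iff swp_swp)

lemma bar_bar [simp]: "bar n (bar n e) = e"
  by (auto simp: mem_bar)

lemma bar_subset_iff: "bar n e \<subseteq> \<gamma> \<longleftrightarrow> e \<subseteq> bar n \<gamma>"
  by (metis bar_bar bar_def image_mono)

lemma swp_in_data_coords_iff: "swp n x \<in> {1..2*n} \<longleftrightarrow> x \<in> {1..2*n}"
  by (auto simp: swp_def)

lemma bar_Int_data_coords: "bar n (e \<inter> {1..2*n}) = bar n e \<inter> {1..2*n}"
  by (auto simp only: mem_bar Int_iff swp_in_data_coords_iff)

lemma measurement_coord_in_bar: "1 \<le> i \<Longrightarrow> 2*n + i \<in> bar n e \<longleftrightarrow> 2*n + i \<in> e"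
  by (simp add: mem_bar swp_def)

lemma fvec_subset:
  assumes "\<forall>j \<in> {1..l}. g j \<subseteq> {1..2*n}"
  shows "fvec l A g i \<subseteq> {1..2*n}"
proof
  fix k assume "k \<in> fvec l A g i"
  then have "{j \<in> {j \<in> {1..l}. GC l A j i}. k \<in> g j} \<noteq> {}"
    unfolding fvec_def f2sum_def by (metis (no_types, lifting) card.empty even_zero mem_Collect_eq)
  then show "k \<in> {1..2*n}"
    using assms by blast
qed

lemma f2dot_HDSrow:
  assumes "\<forall>j \<in> {1..l}. g j \<subseteq> {1..2*n}" and "1 \<le> i"
  shows "f2dot (HDSrow n l A g i) e \<longleftrightarrow> f2dot (fvec l A g i) (e \<inter> {1..2*n}) \<noteq> (2*n + i \<in> e)"
proof -
  let ?f = "fvec l A g i"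
  have f: "?f \<subseteq> {1..2*n}"
    using fvec_subset[OF assms(1)] .
  then have "HDSrow n l A g i \<inter> e
      = (if 2*n + i \<in> e then insert (2*n + i) (?f \<inter> (e \<inter> {1..2*n})) else ?f \<inter> (e \<inter> {1..2*n}))"
    by (auto simp: HDSrow_def)
  moreover have "2*n + i \<notin> ?f \<inter> (e \<inter> {1..2*n})" "finite (?f \<inter> (e \<inter> {1..2*n}))"
    using assms(2) by auto
  ultimately show ?thesis
    by (simp add: f2dot_def)
qed

lemma syn_bar:
  assumes "\<forall>j \<in> {1..l}. g j \<subseteq> {1..2*n}"
  shows "syn n m l A g (bar n e) = {i \<in> {1..m}. f2dot (HDSrow n l A g i) e}"
  unfolding syn_def bar_Int_data_coords bar_bar
  by (auto simp: measurement_coord_in_bar f2dot_HDSrow[OF assms])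

lemma f2_subspace_SDS: "f2_subspace (SDS n m l A g)"
  unfolding f2_subspace_def
proof
  have "f2sum (HDSrow n l A g) {} \<in> SDS n m l A g"
    unfolding SDS_def by blast
  then show "{} \<in> SDS n m l A g"
    by simp
  show "\<forall>s\<in>SDS n m l A g. \<forall>t\<in>SDS n m l A g. sym_diff s t \<in> SDS n m l A g"
  proof (intro ballI)
    fix s t assume "s \<in> SDS n m l A g" "t \<in> SDS n m l A g"
    then obtain I J where I: "I \<subseteq> {1..m}" "s = f2sum (HDSrow n l A g) I"
      and J: "J \<subseteq> {1..m}" "t = f2sum (HDSrow n l A g) J"
      unfolding SDS_def by blast
    then have "sym_diff s t = f2sum (HDSrow n l A g) (sym_diff I J)"
      by (simp add: f2sum_sym_diff finite_subset)
    moreover have "sym_diff I J \<subseteq> {1..m}"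
      using I J by blast
    ultimately show "sym_diff s t \<in> SDS n m l A g"
      unfolding SDS_def by blast
  qed
qed

lemma HDSrow_in_SDS:
  assumes "i \<in> {1..m}"
  shows "HDSrow n l A g i \<in> SDS n m l A g"
proof -
  have "f2sum (HDSrow n l A g) {i} \<in> SDS n m l A g"
    unfolding SDS_def using assms by blast
  then show ?thesis
    by simp
qed

theorem lemma13:
  fixes n m l :: nat and g :: "nat \<Rightarrow> nat set" and A :: "nat \<Rightarrow> nat \<Rightarrow> bool"
    and \<gamma> :: "nat set"
  assumes lm: "l \<le> m"
    and g_sub: "\<forall>j \<in> {1..l}. g j \<subseteq> {1..2*n}"
    and g_comm: "\<forall>i \<in> {1..l}. \<forall>j \<in> {1..l}. \<not> f2dot (bar n (g i)) (g j)"
    and \<gamma>_D: "\<gamma> \<in> DeltaD n m l A g"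
  shows "\<forall>b b'. b \<subseteq> bar n \<gamma> \<longrightarrow> b' \<subseteq> bar n \<gamma> \<longrightarrow>
           card {s \<in> SDS n m l A g. s \<inter> bar n \<gamma> = b}
         = card {s \<in> SDS n m l A g. s \<inter> bar n \<gamma> = b'}"
proof (intro allI impI)
  fix b b' assume b: "b \<subseteq> bar n \<gamma>" and b': "b' \<subseteq> bar n \<gamma>"
  have "\<gamma> \<subseteq> {1..2*n+m}"
    using \<gamma>_D by (simp add: DeltaD_def)
  then have "finite (bar n \<gamma>)"
    by (simp add: bar_def finite_subset)
  moreover have "\<exists>s\<in>SDS n m l A g. odd (card (s \<inter> e))" if "e \<subseteq> bar n \<gamma>" "e \<noteq> {}" for e
  proof -
    have "bar n e \<subseteq> \<gamma>"
      using that(1) by (simp only: bar_subset_iff)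
    moreover have "bar n e \<noteq> {}"
      using that(2) by (simp add: bar_def)
    ultimately have "syn n m l A g (bar n e) \<noteq> {}"
      using \<gamma>_D by (simp add: DeltaD_def)
    then obtain i where "i \<in> {1..m}" "f2dot (HDSrow n l A g i) e"
      using syn_bar[OF g_sub] by auto
    then show ?thesis
      using HDSrow_in_SDS f2dot_def by metis
  qed
  ultimately obtain s s' where "s \<in> SDS n m l A g" "s \<inter> bar n \<gamma> = b"
    and "s' \<in> SDS n m l A g" "s' \<inter> bar n \<gamma> = b'"
    using f2_subspace_trace_surj[OF f2_subspace_SDS] b b' by metis
  then show "card {s \<in> SDS n m l A g. s \<inter> bar n \<gamma> = b}
      = card {s \<in> SDS n m l A g. s \<inter> bar n \<gamma> = b'}"
    using f2_subspace_card_trace_fibres_eq[OF f2_subspace_SDS] by blast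
qed

end
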